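(* Let $m\in\mathbb{N}$ and $\beta\in(1,m+1]$. Suppose that for every $x\in(0,\frac{m}{\beta-1})$ there exist $n\ge0$ and maps $a_1,\ldots,a_n\in\{T_{\beta,0},\ldots,T_{\beta,m}\}$ such that $(a_j\circ\cdots\circ a_1)(x)\in I_{\beta,m}$ for all $1\le j\le n$ and $(a_n\circ\cdots\circ a_1)(x)$ lies in the interior of some choice interval. Then $\Omega_{\beta,m}(x)$ is uncountable for every $x\in(0,\frac{m}{\beta-1})$.
   Context: $I_{\beta,m}=[0,\frac{m}{\beta-1}]$ and $T_{\beta,i}(x)=\beta x-i$ for $i\in\{0,\ldots,m\}$. $\Omega_{\beta,m}(x)$ is the set of sequences $(a_i)_{i=1}^\infty\in\{T_{\beta,0},\ldots,T_{\beta,m}\}^{\mathbb{N}}$ with $(a_n\circ\cdots\circ a_1)(x)\in I_{\beta,m}$ for all $n\in\mathbb{N}$. For $i\in\{1,\ldots,m\}$ the $i$-th choice interval is $[\frac{i}{\beta},\frac{(i-1)\beta+m-(i-1)}{\beta(\beta-1)}]$. *)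

theory Defs
  imports "HOL-Analysis.Analysis"
begin

definition I_beta :: "real \<Rightarrow> nat \<Rightarrow> real set" where
  "I_beta \<beta> m = {0 .. real m / (\<beta> - 1)}"

definition T_beta :: "real \<Rightarrow> nat \<Rightarrow> real \<Rightarrow> real" where
  "T_beta \<beta> i x = \<beta> * x - real i"

text \<open>A sequence of maps is encoded by its digit sequence a :: nat => nat
  (the map number k+1 is T_{beta, a k}); orbit \<beta> a x n = (a_n o ... o a_1)(x).\<close>
fun orbit :: "real \<Rightarrow> (nat \<Rightarrow> nat) \<Rightarrow> real \<Rightarrow> nat \<Rightarrow> real" where
  "orbit \<beta> a x 0 = x"
| "orbit \<beta> a x (Suc n) = T_beta \<beta> (a n) (orbit \<beta> a x n)"

definition Omega :: "real \<Rightarrow> nat \<Rightarrow> real \<Rightarrow> (nat \<Rightarrow> nat) set" where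
  "Omega \<beta> m x = {a. (\<forall>k. a k \<le> m) \<and> (\<forall>n\<ge>1. orbit \<beta> a x n \<in> I_beta \<beta> m)}"

definition choice_interval :: "real \<Rightarrow> nat \<Rightarrow> nat \<Rightarrow> real set" where
  "choice_interval \<beta> m i =
     {real i / \<beta> .. ((real i - 1) * \<beta> + real m - (real i - 1)) / (\<beta> * (\<beta> - 1))}"

end

theory Submission
  imports Defs
begin

text \<open>A point in the interior of the i-th choice interval is mapped back into
  J = (0, m/(beta-1)) both by T_{beta,i} and by T_{beta,i-1}. Hence the hypothesis provides, from
  every point of J, two admissible finite words that return to J and differ in one digit.
  Concatenating such words along an arbitrary binary sequence embeds the Cantor space
  {0,1}^N injectively into Omega_{beta,m}(x).\<close>

lemma orbit_cong:
  "(\<And>k. k < j \<Longrightarrow> a k = b k) \<Longrightarrow> orbit \<beta> a x j = orbit \<beta> b x j"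
  by (induction j) auto

lemma orbit_add:
  "orbit \<beta> a x (p + j) = orbit \<beta> (\<lambda>k. a (p + k)) (orbit \<beta> a x p) j"
  by (induction j) auto

definition admissible_word :: "real \<Rightarrow> nat \<Rightarrow> nat list \<Rightarrow> real \<Rightarrow> bool" where
  "admissible_word \<beta> m w x \<longleftrightarrow>
     set w \<subseteq> {..m} \<and> (\<forall>j\<in>{1..length w}. orbit \<beta> ((!) w) x j \<in> I_beta \<beta> m)"

definition word_end :: "real \<Rightarrow> nat list \<Rightarrow> real \<Rightarrow> real" where
  "word_end \<beta> w x = orbit \<beta> ((!) w) x (length w)"

lemma orbit_append_prefix:
  "j \<le> length w \<Longrightarrow> orbit \<beta> ((!) (w @ u)) x j = orbit \<beta> ((!) w) x j"
  by (rule orbit_cong) (auto simp: nth_append)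

lemma orbit_append_suffix:
  "orbit \<beta> ((!) (w @ u)) x (length w + j) = orbit \<beta> ((!) u) (word_end \<beta> w x) j"
  by (simp add: orbit_add orbit_append_prefix word_end_def)

lemma word_end_append: "word_end \<beta> (w @ u) x = word_end \<beta> u (word_end \<beta> w x)"
  using orbit_append_suffix[of \<beta> w u x "length u"] by (simp add: word_end_def)

lemma admissible_word_append:
  assumes "admissible_word \<beta> m w x" and "admissible_word \<beta> m u (word_end \<beta> w x)"
  shows "admissible_word \<beta> m (w @ u) x"
  unfolding admissible_word_def
proof (intro conjI ballI)
  show "set (w @ u) \<subseteq> {..m}"
    using assms by (simp add: admissible_word_def)
next
  fix j assume j: "j \<in> {1..length (w @ u)}"
  show "orbit \<beta> ((!) (w @ u)) x j \<in> I_beta \<beta> m"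
  proof (cases "j \<le> length w")
    case True
    then show ?thesis
      using assms(1) j by (auto simp: admissible_word_def orbit_append_prefix)
  next
    case False
    define i where "i = j - length w"
    have "j = length w + i" "i \<in> {1..length u}"
      using j False by (auto simp: i_def)
    then show ?thesis
      using assms(2) by (auto simp: admissible_word_def orbit_append_suffix)
  qed
qed

lemma word_end_map_upt: "word_end \<beta> (map a [0..<n]) x = orbit \<beta> a x n"
  using orbit_cong[of n "(!) (map a [0..<n])" a \<beta> x] by (simp add: word_end_def)

lemma admissible_word_map_upt:
  "admissible_word \<beta> m (map a [0..<n]) x \<longleftrightarrow>
     (\<forall>k<n. a k \<le> m) \<and> (\<forall>j\<in>{1..n}. orbit \<beta> a x j \<in> I_beta \<beta> m)"
proof -
  have "orbit \<beta> ((!) (map a [0..<n])) x j = orbit \<beta> a x j" if "j \<le> n" for j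
    using that by (intro orbit_cong) simp
  then show ?thesis
    by (auto simp: admissible_word_def image_subset_iff)
qed

lemma admissible_word_single:
  "admissible_word \<beta> m [d] x \<longleftrightarrow> d \<le> m \<and> T_beta \<beta> d x \<in> I_beta \<beta> m"
  by (simp add: admissible_word_def)

lemma word_end_single: "word_end \<beta> [d] x = T_beta \<beta> d x"
  by (simp add: word_end_def)

lemma T_beta_interior_choice_interval:
  assumes "1 < \<beta>" and "1 \<le> i" and "z \<in> interior (choice_interval \<beta> m i)"
    and "d = i \<or> d = i - 1"
  shows "T_beta \<beta> d z \<in> {0 <..< real m / (\<beta> - 1)}"
proof -
  have lo: "real i < \<beta> * z"
    and hi: "z * (\<beta> * (\<beta> - 1)) < (real i - 1) * \<beta> + real m - (real i - 1)"
    using assms(1,3) by (auto simp: choice_interval_def field_simps)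
  have "real i - 1 \<le> real d" "real d \<le> real i"
    using assms(2,4) by (auto simp: of_nat_diff)
  moreover have "(\<beta> * z - (real i - 1)) * (\<beta> - 1) < real m"
    using hi by (simp add: algebra_simps)
  ultimately have "0 < \<beta> * z - real d" "(\<beta> * z - real d) * (\<beta> - 1) < real m"
    using lo assms(1) by (smt (verit) mult_right_mono)+
  then show ?thesis
    using assms(1) by (simp add: T_beta_def pos_less_divide_eq)
qed

lemma uncountable_UNIV_nat_bool: "uncountable (UNIV :: (nat \<Rightarrow> bool) set)"
proof
  assume "countable (UNIV :: (nat \<Rightarrow> bool) set)"
  then obtain f :: "nat \<Rightarrow> nat \<Rightarrow> bool" where "range f = UNIV"
    by (metis uncountable_def UNIV_not_empty)
  then obtain n where "f n = (\<lambda>k. \<not> f k k)"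
    by (metis UNIV_I imageE)
  then have "f n n = (\<not> f n n)"
    by (rule fun_cong)
  then show False
    by simp
qed

locale binary_branching =
  fixes \<beta> :: real and m :: nat and J :: "real set"
    and word :: "real \<Rightarrow> bool \<Rightarrow> nat list" and branch_pos :: "real \<Rightarrow> nat"
  assumes word_admissible: "y \<in> J \<Longrightarrow> admissible_word \<beta> m (word y b) y"
    and word_end_in: "y \<in> J \<Longrightarrow> word_end \<beta> (word y b) y \<in> J"
    and branch_pos_less: "y \<in> J \<Longrightarrow> branch_pos y < length (word y b)"
    and words_differ: "y \<in> J \<Longrightarrow> word y True ! branch_pos y \<noteq> word y False ! branch_pos y"
begin

fun stage :: "real \<Rightarrow> (nat \<Rightarrow> bool) \<Rightarrow> nat \<Rightarrow> nat list" where
  "stage x s 0 = []"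
| "stage x s (Suc n) = stage x s n @ word (word_end \<beta> (stage x s n) x) (s n)"

lemma stage_invariant:
  assumes "x \<in> J"
  shows "admissible_word \<beta> m (stage x s n) x \<and> word_end \<beta> (stage x s n) x \<in> J
    \<and> n \<le> length (stage x s n)"
proof (induction n)
  case 0
  then show ?case
    using assms by (simp add: admissible_word_def word_end_def)
next
  case (Suc n)
  define y where "y = word_end \<beta> (stage x s n) x"
  have y: "y \<in> J"
    using Suc.IH by (simp add: y_def)
  have "admissible_word \<beta> m (stage x s (Suc n)) x"
    using Suc.IH word_admissible[OF y] by (simp add: y_def admissible_word_append)
  moreover have "word_end \<beta> (stage x s (Suc n)) x \<in> J"
    using word_end_in[OF y] by (simp add: y_def word_end_append)
  moreover have "Suc n \<le> length (stage x s (Suc n))"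
    using Suc.IH branch_pos_less[OF y, of "s n"] by (simp add: y_def)
  ultimately show ?case
    by blast
qed

lemma stage_prefix: "n \<le> n' \<Longrightarrow> \<exists>v. stage x s n' = stage x s n @ v"
  by (induction n' rule: dec_induct) auto

lemma stage_cong: "(\<And>k. k < n \<Longrightarrow> s k = s' k) \<Longrightarrow> stage x s n = stage x s' n"
  by (induction n) auto

definition digits :: "real \<Rightarrow> (nat \<Rightarrow> bool) \<Rightarrow> nat \<Rightarrow> nat" where
  "digits x s k = stage x s (Suc k) ! k"

lemma digits_eq_stage_nth:
  assumes "x \<in> J" and "k < length (stage x s n)"
  shows "digits x s k = stage x s n ! k"
proof -
  obtain v where v: "stage x s (max n (Suc k)) = stage x s n @ v"
    using stage_prefix by (meson max.cobounded1)
  obtain v' where v': "stage x s (max n (Suc k)) = stage x s (Suc k) @ v'"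
    using stage_prefix by (meson max.cobounded2)
  have "k < length (stage x s (Suc k))"
    using stage_invariant[OF assms(1)] Suc_le_eq by blast
  then have "stage x s (max n (Suc k)) ! k = stage x s (Suc k) ! k"
    using v' by (simp add: nth_append del: stage.simps)
  moreover have "stage x s (max n (Suc k)) ! k = stage x s n ! k"
    using v assms(2) by (simp add: nth_append)
  ultimately show ?thesis
    by (simp add: digits_def del: stage.simps)
qed

lemma digits_in_Omega:
  assumes "x \<in> J"
  shows "digits x s \<in> Omega \<beta> m x"
proof -
  have "digits x s k \<le> m" for k
  proof -
    have "Suc k \<le> length (stage x s (Suc k))" "admissible_word \<beta> m (stage x s (Suc k)) x"
      using stage_invariant[OF assms] by blast+
    then have "stage x s (Suc k) ! k \<in> {..m}"
      unfolding admissible_word_def Suc_le_eq by (meson nth_mem subsetD)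
    then show ?thesis
      by (simp add: digits_def del: stage.simps)
  qed
  moreover have "orbit \<beta> (digits x s) x j \<in> I_beta \<beta> m" if "j \<ge> 1" for j
  proof -
    have inv: "j \<le> length (stage x s j)" "admissible_word \<beta> m (stage x s j) x"
      using stage_invariant[OF assms] by blast+
    have "orbit \<beta> (digits x s) x j = orbit \<beta> ((!) (stage x s j)) x j"
      using inv(1) by (intro orbit_cong digits_eq_stage_nth[OF assms]) simp
    then show ?thesis
      using inv that by (simp add: admissible_word_def)
  qed
  ultimately show ?thesis
    by (simp add: Omega_def)
qed

text \<open>The digit at position length(stage n) + branch_pos reveals the bit s n.\<close>

lemma digits_eq_imp_prefix_eq:
  assumes "x \<in> J" and "digits x s = digits x s'"
  shows "k < n \<Longrightarrow> s k = s' k"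
proof (induction n arbitrary: k)
  case (Suc n)
  have same: "stage x s n = stage x s' n"
    using Suc.IH by (intro stage_cong) simp
  define y where "y = word_end \<beta> (stage x s n) x"
  define p where "p = length (stage x s n) + branch_pos y"
  have y: "y \<in> J"
    using stage_invariant[OF assms(1)] by (simp add: y_def)
  have digit_at_p: "digits x t p = word y (t n) ! branch_pos y" if "stage x t n = stage x s n" for t
  proof -
    have "p < length (stage x t (Suc n))"
      using branch_pos_less[OF y] that by (simp add: p_def y_def)
    then have "digits x t p = stage x t (Suc n) ! p"
      by (rule digits_eq_stage_nth[OF assms(1)])
    then show ?thesis
      using that by (simp add: p_def y_def nth_append)
  qed
  have "word y (s n) ! branch_pos y = word y (s' n) ! branch_pos y"
    using digit_at_p[of s] digit_at_p[of s'] same assms(2) by simp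
  then have "s n = s' n"
    using words_differ[OF y] by (cases "s n"; cases "s' n") auto
  then show ?case
    using Suc.IH Suc.prems by (auto simp: less_Suc_eq)
qed simp

lemma inj_digits: "x \<in> J \<Longrightarrow> inj (digits x)"
  by (rule injI) (use digits_eq_imp_prefix_eq in blast)

lemma uncountable_Omega:
  assumes "x \<in> J"
  shows "uncountable (Omega \<beta> m x)"
proof
  assume "countable (Omega \<beta> m x)"
  then have "countable (range (digits x))"
    using digits_in_Omega[OF assms] by (blast intro: countable_subset)
  then show False
    using inj_digits[OF assms] uncountable_UNIV_nat_bool countable_image_inj_on by blast
qed

end

lemma binary_branching_choice_digits:
  fixes \<beta> :: real and m :: nat and N C :: "real \<Rightarrow> nat" and A :: "real \<Rightarrow> nat \<Rightarrow> nat"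
  defines "J \<equiv> {0 <..< real m / (\<beta> - 1)}"
  assumes "1 < \<beta>"
    and escape: "\<And>y. y \<in> J \<Longrightarrow> admissible_word \<beta> m (map (A y) [0..<N y]) y \<and> C y \<in> {1..m}
                   \<and> orbit \<beta> (A y) y (N y) \<in> interior (choice_interval \<beta> m (C y))"
  shows "binary_branching \<beta> m J
           (\<lambda>y b. map (A y) [0..<N y] @ [if b then C y else C y - 1]) N"
proof unfold_locales
  fix y b assume y: "y \<in> J"
  define d where "d = (if b then C y else C y - 1)"
  have "d \<le> m"
    using escape[OF y] by (auto simp: d_def)
  have "T_beta \<beta> d (orbit \<beta> (A y) y (N y)) \<in> J"
    unfolding J_def using escape[OF y] \<open>1 < \<beta>\<close>
    by (intro T_beta_interior_choice_interval[where i = "C y"]) (auto simp: d_def)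
  then have end_in: "word_end \<beta> (map (A y) [0..<N y] @ [d]) y \<in> J"
    by (simp add: word_end_append word_end_map_upt word_end_single)
  then show "word_end \<beta> (map (A y) [0..<N y] @ [if b then C y else C y - 1]) y \<in> J"
    by (simp add: d_def)
  have "J \<subseteq> I_beta \<beta> m"
    by (auto simp: J_def I_beta_def)
  then have "admissible_word \<beta> m (map (A y) [0..<N y] @ [d]) y"
    using escape[OF y] \<open>d \<le> m\<close> end_in
    by (intro admissible_word_append)
       (auto simp: admissible_word_single word_end_map_upt word_end_append word_end_single)
  then show "admissible_word \<beta> m (map (A y) [0..<N y] @ [if b then C y else C y - 1]) y"
    by (simp add: d_def)
  show "N y < length (map (A y) [0..<N y] @ [if b then C y else C y - 1])"
    by simp
  show "(map (A y) [0..<N y] @ [if True then C y else C y - 1]) ! N y \<noteq>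
        (map (A y) [0..<N y] @ [if False then C y else C y - 1]) ! N y"
    using escape[OF y] by (auto simp: nth_append)
qed

theorem proposition2p3:
  fixes m :: nat and \<beta> :: real
  assumes "1 < \<beta>" and "\<beta> \<le> real m + 1"
    and "\<forall>x\<in>{0 <..< real m / (\<beta> - 1)}. \<exists>n::nat. \<exists>a::nat \<Rightarrow> nat.
           (\<forall>k<n. a k \<le> m) \<and>
           (\<forall>j\<in>{1..n}. orbit \<beta> a x j \<in> I_beta \<beta> m) \<and>
           (\<exists>i\<in>{1..m}. orbit \<beta> a x n \<in> interior (choice_interval \<beta> m i))"
  shows "\<forall>x\<in>{0 <..< real m / (\<beta> - 1)}. uncountable (Omega \<beta> m x)"
proof -
  obtain N C :: "real \<Rightarrow> nat" and A :: "real \<Rightarrow> nat \<Rightarrow> nat" where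
    "\<And>y. y \<in> {0 <..< real m / (\<beta> - 1)} \<Longrightarrow>
       admissible_word \<beta> m (map (A y) [0..<N y]) y \<and> C y \<in> {1..m}
       \<and> orbit \<beta> (A y) y (N y) \<in> interior (choice_interval \<beta> m (C y))"
    using assms(3) unfolding admissible_word_map_upt by metis
  then interpret binary_branching \<beta> m "{0 <..< real m / (\<beta> - 1)}"
    "\<lambda>y b. map (A y) [0..<N y] @ [if b then C y else C y - 1]" N
    by (rule binary_branching_choice_digits[OF assms(1)])
  show ?thesis
    using uncountable_Omega by blast
qed

end
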